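(* Let $F:\mathbb{R}^n\to\mathbb{R}$ be convex and $1$-smooth, let $x^\star$ be a minimizer of $F$ and $F^\star=F(x^\star)$. Let $k\ge1$, $N=2^k-1$, and let $(h_0,\dots,h_{N-1})=\pi_k$ be the silver stepsize schedule. Let $x^0\in\mathbb{R}^n$ and $x^{i+1}=x^i-h_i\nabla F(x^i)$ for $i=0,\dots,N-1$. Then, with $\rho=1+\sqrt2$ and writing $Q_i=F^\star-F(x^i)-\langle\nabla F(x^i),x^\star-x^i\rangle-\tfrac12\|\nabla F(x^i)\|^2$, $$(2\rho^k-1)\big(F^\star-F(x^N)\big)+\tfrac12\|x^0-x^\star\|^2-\sum_{i=0}^{N-1}h_iQ_i-\rho^kQ_N-\tfrac12\big\|x^N-\rho^k\nabla F(x^N)-x^\star\big\|^2\ge0.$$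
   Context: A differentiable convex function $F$ is $1$-smooth if $\nabla F$ is $1$-Lipschitz (equivalently $\nabla F$ is $1$-cocoercive). The silver ratio is $\rho=1+\sqrt2$. The silver stepsize schedule $\pi_k\in\mathbb{R}^{2^k-1}$ is defined recursively by $\pi_1=(\sqrt2)$ and $\pi_{k+1}=(\pi_k,\ 1+\rho^{k-1},\ \pi_k)$ (concatenation). *)

theory Defs
  imports "HOL-Analysis.Analysis"
begin

definition silver_ratio :: real where
  "silver_ratio = 1 + sqrt 2"

fun silver_schedule :: "nat \<Rightarrow> real list" where
  "silver_schedule 0 = []"
| "silver_schedule (Suc 0) = [sqrt 2]"
| "silver_schedule (Suc (Suc k)) =
     silver_schedule (Suc k) @ [1 + silver_ratio ^ k] @ silver_schedule (Suc k)"

fun gd_iter :: "('a::real_normed_vector \<Rightarrow> 'a) \<Rightarrow> real list \<Rightarrow> 'a \<Rightarrow> nat \<Rightarrow> 'a" where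
  "gd_iter G hs x0 0 = x0"
| "gd_iter G hs x0 (Suc i) =
     gd_iter G hs x0 i - (hs ! i) *\<^sub>R G (gd_iter G hs x0 i)"

end

theory Submission
  imports Defs
begin

text \<open>
The quantity in the theorem, with x* replaced by an arbitrary point y, is a certificate
E_k(x_0, y) for the schedule pi_k, and it is nonnegative by induction on k. The schedule
pi_(k+1) = (pi_k, a, pi_k) runs pi_k from x_0 to x_M, takes the long step a to x', and runs pi_k
again from x' to x_N. Using only rho^2 = 2 rho + 1, E_(k+1)(x_0, y) is exactly
E_k(x_0, y) + E_k(x', y) + rho (E_k(x', x_M) + E_k(x', x_N)) plus nonnegative multiples of
cocoercivity inequalities F x + <G x, y - x> + |G y - G x|^2 / 2 <= F y, some of them summed
with the weights of pi_k and telescoped along the second run. The induction starts at k = 0: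
the empty schedule has E_0 = 0, and the middle step 1 + rho^(k-1) read at k = 0 is
1 + 1/rho = sqrt 2, which gives pi_1.
\<close>

lemma has_real_derivative_along_line:
  fixes F :: "'a::real_inner \<Rightarrow> real"
  assumes grad: "\<And>x. (F has_derivative (\<lambda>h. G x \<bullet> h)) (at x)"
  shows "((\<lambda>t. F (x + t *\<^sub>R d)) has_real_derivative (G (x + t *\<^sub>R d) \<bullet> d)) (at t)"
proof -
  have "((\<lambda>t. x + t *\<^sub>R d) has_derivative (\<lambda>s. s *\<^sub>R d)) (at t)"
    by (auto intro!: derivative_eq_intros)
  from has_derivative_compose[OF this grad]
  have "((\<lambda>t. F (x + t *\<^sub>R d)) has_derivative (\<lambda>s. s * (G (x + t *\<^sub>R d) \<bullet> d))) (at t)"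
    by simp
  then show ?thesis
    by (simp add: has_field_derivative_def mult_commute_abs)
qed

lemma lipschitz_gradient_upper_bound:
  fixes F :: "'a::real_inner \<Rightarrow> real"
  assumes grad: "\<And>x. (F has_derivative (\<lambda>h. G x \<bullet> h)) (at x)"
    and lipschitz: "\<And>x y. norm (G x - G y) \<le> L * norm (x - y)"
  shows "F y \<le> F x + G x \<bullet> (y - x) + L / 2 * (norm (y - x))\<^sup>2"
proof -
  define d where "d = y - x"
  define \<psi> where "\<psi> t = F (x + t *\<^sub>R d) - t * (G x \<bullet> d) - L / 2 * t\<^sup>2 * (norm d)\<^sup>2" for t
  have "\<psi> 1 \<le> \<psi> 0"
  proof (rule DERIV_nonpos_imp_nonincreasing[of 0 1 \<psi>])
    fix t :: real
    assume "0 \<le> t" "t \<le> 1"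
    have "G (x + t *\<^sub>R d) \<bullet> d - G x \<bullet> d \<le> norm (G (x + t *\<^sub>R d) - G x) * norm d"
      by (metis inner_diff_left norm_cauchy_schwarz)
    also have "\<dots> \<le> L * t * (norm d)\<^sup>2"
      using mult_right_mono[OF lipschitz[of "x + t *\<^sub>R d" x], of "norm d"] \<open>0 \<le> t\<close>
      by (simp add: power2_eq_square mult.assoc)
    finally have "G (x + t *\<^sub>R d) \<bullet> d - G x \<bullet> d - L * t * (norm d)\<^sup>2 \<le> 0"
      by simp
    moreover have "DERIV \<psi> t :> G (x + t *\<^sub>R d) \<bullet> d - G x \<bullet> d - L * t * (norm d)\<^sup>2"
      unfolding \<psi>_def
      by (auto intro!: derivative_eq_intros has_real_derivative_along_line[OF grad]
          simp: power2_eq_square)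
    ultimately show "\<exists>D. DERIV \<psi> t :> D \<and> D \<le> 0"
      by blast
  qed simp
  then show ?thesis
    by (simp add: \<psi>_def d_def)
qed

lemma convex_gradient_lower_bound:
  fixes F :: "'a::real_inner \<Rightarrow> real"
  assumes convex: "convex_on UNIV F"
    and grad: "\<And>x. (F has_derivative (\<lambda>h. G x \<bullet> h)) (at x)"
  shows "F x + G x \<bullet> (y - x) \<le> F y"
proof -
  define d where "d = y - x"
  define g where "g t = F (x + t *\<^sub>R d)" for t
  have "convex_on UNIV g"
  proof (rule convex_onI)
    fix u a b :: real
    assume "0 < u" "u < 1"
    have "x + ((1 - u) *\<^sub>R a + u *\<^sub>R b) *\<^sub>R d = (1 - u) *\<^sub>R (x + a *\<^sub>R d) + u *\<^sub>R (x + b *\<^sub>R d)"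
      by (simp add: algebra_simps)
    then show "g ((1 - u) *\<^sub>R a + u *\<^sub>R b) \<le> (1 - u) * g a + u * g b"
      using convex_onD[OF convex, of u] \<open>0 < u\<close> \<open>u < 1\<close> by (simp add: g_def)
  qed simp
  then have "G x \<bullet> d * (1 - 0) \<le> g 1 - g 0"
    using has_real_derivative_along_line[OF grad, of x d 0]
    by (intro convex_on_imp_above_tangent) (auto simp: g_def[abs_def])
  then show ?thesis
    by (simp add: g_def d_def)
qed

lemma smooth_convex_cocoercive:
  fixes F :: "'a::real_inner \<Rightarrow> real"
  assumes convex: "convex_on UNIV F"
    and grad: "\<And>x. (F has_derivative (\<lambda>h. G x \<bullet> h)) (at x)"
    and lipschitz: "\<And>x y. norm (G x - G y) \<le> L * norm (x - y)"
    and "L > 0"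
  shows "F x + G x \<bullet> (y - x) + 1 / (2 * L) * (norm (G y - G x))\<^sup>2 \<le> F y"
proof -
  define d where "d = G y - G x"
  define z where "z = y - (1 / L) *\<^sub>R d"
  have "F x + G x \<bullet> (z - x) \<le> F z"
    by (rule convex_gradient_lower_bound[OF convex grad])
  also have "F z \<le> F y + G y \<bullet> (z - y) + L / 2 * (norm (z - y))\<^sup>2"
    by (rule lipschitz_gradient_upper_bound[OF grad lipschitz])
  also have "L / 2 * (norm (z - y))\<^sup>2 = (norm d)\<^sup>2 / (2 * L)"
    using \<open>L > 0\<close> by (simp add: z_def power2_eq_square)
  finally have "F x + G x \<bullet> (y - x) - (G x \<bullet> d) / L \<le> F y - (G y \<bullet> d) / L + (norm d)\<^sup>2 / (2 * L)"
    by (simp add: z_def inner_diff_right)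
  moreover have "(G y \<bullet> d) / L - (G x \<bullet> d) / L = (norm d)\<^sup>2 / L"
    by (simp add: d_def inner_diff_left diff_divide_distrib power2_norm_eq_inner)
  ultimately show ?thesis
    by (simp add: d_def)
qed

lemma silver_ratio_pos: "silver_ratio > 0"
  by (simp add: silver_ratio_def add_pos_nonneg)

lemma silver_ratio_sq: "silver_ratio\<^sup>2 = 2 * silver_ratio + 1"
  by (simp add: silver_ratio_def power2_eq_square algebra_simps)

lemma silver_schedule_Suc:
  "silver_schedule (Suc k) =
     silver_schedule k @ [1 + silver_ratio ^ k / silver_ratio] @ silver_schedule k"
proof (cases k)
  case 0
  have "1 + 1 / silver_ratio = sqrt 2"
    using silver_ratio_pos silver_ratio_sq
    by (simp add: silver_ratio_def field_simps power2_eq_square)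
  with 0 show ?thesis by simp
qed (use silver_ratio_pos in simp)

lemma length_silver_schedule: "length (silver_schedule k) = 2 ^ k - 1"
proof (induction k)
  case (Suc k)
  have "(1::nat) \<le> 2 ^ k" by simp
  with Suc show ?case by (simp add: silver_schedule_Suc)
qed simp

lemma silver_schedule_nonneg: "h \<in> set (silver_schedule k) \<Longrightarrow> 0 \<le> h"
  by (induction k) (auto simp: silver_schedule_Suc silver_ratio_pos less_imp_le)

lemma sum_list_silver_schedule: "sum_list (silver_schedule k) = silver_ratio ^ k - 1"
proof (induction k)
  case (Suc k)
  have "silver_ratio * silver_ratio ^ Suc k = silver_ratio\<^sup>2 * silver_ratio ^ k"
    by (simp add: power2_eq_square)
  then have "silver_ratio ^ Suc k = 2 * silver_ratio ^ k + silver_ratio ^ k / silver_ratio"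
    using silver_ratio_pos by (simp add: silver_ratio_sq field_simps)
  with Suc show ?case by (simp add: silver_schedule_Suc)
qed simp

lemma sum_lessThan_add:
  fixes f :: "nat \<Rightarrow> 'a::comm_monoid_add"
  shows "(\<Sum>i<m + n. f i) = (\<Sum>i<m. f i) + (\<Sum>i<n. f (m + i))"
  by (induction n) (simp_all add: add.assoc)

lemma gd_iter_append_prefix: "i \<le> length p \<Longrightarrow> gd_iter G (p @ q) x0 i = gd_iter G p x0 i"
  by (induction i) (auto simp: nth_append)

lemma gd_iter_append:
  "gd_iter G (p @ q) x0 (length p + j) = gd_iter G q (gd_iter G p x0 (length p)) j"
  by (induction j) (auto simp: nth_append gd_iter_append_prefix)

lemma gd_iter_append_length:
  "gd_iter G (p @ q) x0 (length (p @ q)) = gd_iter G q (gd_iter G p x0 (length p)) (length q)"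
  using gd_iter_append[of G p q x0 "length q"] by simp

lemma gd_iter_telescope: "x0 - gd_iter G hs x0 n = (\<Sum>i<n. hs ! i *\<^sub>R G (gd_iter G hs x0 i))"
  by (induction n) (auto simp: algebra_simps)

definition gd_weighted_sum ::
    "('a::real_normed_vector \<Rightarrow> real) \<Rightarrow> ('a \<Rightarrow> 'a) \<Rightarrow> real list \<Rightarrow> 'a \<Rightarrow> real" where
  "gd_weighted_sum f G hs x0 = (\<Sum>i<length hs. hs ! i * f (gd_iter G hs x0 i))"

lemma gd_weighted_sum_append:
  "gd_weighted_sum f G (p @ q) x0 =
     gd_weighted_sum f G p x0 + gd_weighted_sum f G q (gd_iter G p x0 (length p))"
  by (auto simp: gd_weighted_sum_def sum_lessThan_add nth_append gd_iter_append
      gd_iter_append_prefix intro!: sum.cong)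

lemma gd_weighted_sum_single: "gd_weighted_sum f G [a] x0 = a * f x0"
  by (simp add: gd_weighted_sum_def)

text \<open>The paper's Q_i with x* replaced by y; for a minimiser y (G y = 0) it is the slack of the
  cocoercivity inequality from z to y.\<close>
definition Q_gap :: "('a::real_inner \<Rightarrow> real) \<Rightarrow> ('a \<Rightarrow> 'a) \<Rightarrow> 'a \<Rightarrow> 'a \<Rightarrow> real" where
  "Q_gap F G y z = F y - F z - G z \<bullet> (y - z) - 1/2 * (norm (G z))\<^sup>2"

definition certificate ::
    "('a::real_inner \<Rightarrow> real) \<Rightarrow> ('a \<Rightarrow> 'a) \<Rightarrow> real \<Rightarrow> 'a \<Rightarrow> 'a \<Rightarrow> 'a \<Rightarrow> real \<Rightarrow> real" where
  "certificate F G A x0 y xN P =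
     (2 * A - 1) * (F y - F xN) + 1/2 * (norm (x0 - y))\<^sup>2 - P - A * Q_gap F G y xN
     - 1/2 * (norm (xN - A *\<^sub>R G xN - y))\<^sup>2"

definition schedule_certificate ::
    "('a::real_inner \<Rightarrow> real) \<Rightarrow> ('a \<Rightarrow> 'a) \<Rightarrow> real list \<Rightarrow> real \<Rightarrow> 'a \<Rightarrow> 'a \<Rightarrow> real" where
  "schedule_certificate F G hs A x0 y =
     certificate F G A x0 y (gd_iter G hs x0 (length hs)) (gd_weighted_sum (Q_gap F G y) G hs x0)"

lemma schedule_certificate_Nil: "schedule_certificate F G [] 1 x0 y = 0"
  by (simp add: schedule_certificate_def certificate_def gd_weighted_sum_def Q_gap_def
      power2_norm_eq_inner inner_diff_left inner_diff_right inner_commute)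

lemma certificate_glue_identity:
  fixes F :: "'a::real_inner \<Rightarrow> real"
  assumes r_sq: "r\<^sup>2 = 2 * r + 1" and A_eq: "A = r * B" and a_eq: "a = 1 + B"
    and z_eq: "z = xM - a *\<^sub>R G xM"
  shows "certificate F G (r * A) x y xN (P + a * Q_gap F G y xM + R)
    = certificate F G A x y xM P + certificate F G A z y xN R
    + r * certificate F G A z xM xN SM + r * certificate F G A z xN xN SN
    + r * (SM - (1/2 * (A - 1) * (norm (G xM))\<^sup>2 - G xM \<bullet> (z - xN)))
    + r * (SN - (1/2 * (A - 1) * (norm (G xN))\<^sup>2 - G xN \<bullet> (z - xN)))
    + r * (F xM - (F xN + G xN \<bullet> (xM - xN) + 1/2 * (norm (G xM - G xN))\<^sup>2))
    + A * (F xN - (F xM + G xM \<bullet> (xN - xM) + 1/2 * (norm (G xN - G xM))\<^sup>2))"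
  unfolding certificate_def Q_gap_def z_eq A_eq a_eq
  by (simp add: power2_norm_eq_inner inner_diff_left inner_diff_right inner_add_left
      inner_add_right inner_commute power_mult_distrib) (use r_sq in algebra)

context
  fixes F :: "'a::real_inner \<Rightarrow> real" and G :: "'a \<Rightarrow> 'a"
  assumes cocoercive: "\<And>x y. F x + G x \<bullet> (y - x) + 1/2 * (norm (G y - G x))\<^sup>2 \<le> F y"
begin

lemma Q_gap_lower_bound: "1/2 * (norm (G z))\<^sup>2 - G z \<bullet> G w \<le> Q_gap F G z w"
proof -
  have "(norm (G z - G w))\<^sup>2 = (norm (G z))\<^sup>2 - 2 * (G z \<bullet> G w) + (norm (G w))\<^sup>2"
    by (simp add: power2_norm_eq_inner inner_diff_left inner_diff_right inner_commute)
  with cocoercive[of w z] show ?thesis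
    unfolding Q_gap_def by linarith
qed

lemma gd_weighted_sum_Q_gap_lower_bound:
  assumes nonneg: "\<And>h. h \<in> set hs \<Longrightarrow> 0 \<le> h"
  shows "1/2 * sum_list hs * (norm (G z))\<^sup>2 - G z \<bullet> (x - gd_iter G hs x (length hs))
    \<le> gd_weighted_sum (Q_gap F G z) G hs x"
proof -
  let ?x = "gd_iter G hs x"
  have "1/2 * sum_list hs * (norm (G z))\<^sup>2 - G z \<bullet> (x - ?x (length hs))
      = (\<Sum>i<length hs. hs ! i * (1/2 * (norm (G z))\<^sup>2 - G z \<bullet> G (?x i)))"
    by (simp add: gd_iter_telescope sum_list_sum_nth atLeast0LessThan inner_sum_right
        sum_distrib_left sum_distrib_right sum_subtractf algebra_simps)
  also have "\<dots> \<le> gd_weighted_sum (Q_gap F G z) G hs x"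
    unfolding gd_weighted_sum_def
    using nonneg Q_gap_lower_bound by (intro sum_mono mult_left_mono) auto
  finally show ?thesis .
qed

lemma schedule_certificate_double:
  assumes nonneg: "\<And>h. h \<in> set hs \<Longrightarrow> 0 \<le> h"
    and sum: "sum_list hs = A - 1"
    and IH: "\<And>x0 y. 0 \<le> schedule_certificate F G hs A x0 y"
  shows "0 \<le> schedule_certificate F G (hs @ [1 + A / silver_ratio] @ hs) (silver_ratio * A) x0 y"
proof -
  define r where "r = silver_ratio"
  define a where "a = 1 + A / r"
  define xM where "xM = gd_iter G hs x0 (length hs)"
  define x' where "x' = xM - a *\<^sub>R G xM"
  define xN where "xN = gd_iter G hs x' (length hs)"
  define S where "S y = gd_weighted_sum (Q_gap F G y) G hs x'" for y
  have r: "r\<^sup>2 = 2 * r + 1" "r > 0"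
    using silver_ratio_sq silver_ratio_pos by (simp_all add: r_def)
  have "gd_iter G [a] xM (length [a]) = x'"
    by (simp add: x'_def)
  then have split: "schedule_certificate F G (hs @ [a] @ hs) (r * A) x0 y
      = certificate F G (r * A) x0 y xN
          (gd_weighted_sum (Q_gap F G y) G hs x0 + a * Q_gap F G y xM + S y)"
    by (simp only: schedule_certificate_def gd_iter_append_length gd_weighted_sum_append
        gd_weighted_sum_single xM_def [symmetric] xN_def [symmetric] S_def add.assoc)
  have "0 \<le> A" using sum sum_list_nonneg[of hs] nonneg by fastforce
  have c: "1/2 * (A - 1) * (norm (G z))\<^sup>2 - G z \<bullet> (x' - xN) \<le> S z" for z
    using gd_weighted_sum_Q_gap_lower_bound[of hs z x', OF nonneg] by (simp add: sum S_def xN_def)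
  have "A = r * (A / r)" using r by simp
  from certificate_glue_identity[where F = F and G = G and x = x0 and y = y and xN = xN
      and P = "gd_weighted_sum (Q_gap F G y) G hs x0" and R = "S y" and SM = "S xM" and SN = "S xN",
      OF r(1) this a_def x'_def]
  show ?thesis
    unfolding r_def [symmetric] a_def [symmetric] split
    using IH[of x0 y] IH[of x' y] IH[of x' xM] IH[of x' xN] c[of xM] c[of xN]
      cocoercive[of xN xM] cocoercive[of xM xN] \<open>0 \<le> A\<close> r(2)
    by (simp add: schedule_certificate_def xM_def [symmetric] xN_def [symmetric] S_def)
qed

lemma silver_schedule_certificate_nonneg:
  "0 \<le> schedule_certificate F G (silver_schedule k) (silver_ratio ^ k) x0 y"
proof (induction k arbitrary: x0 y)
  case 0
  show ?case by (simp add: schedule_certificate_Nil)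
next
  case (Suc k)
  show ?case
    unfolding silver_schedule_Suc power_Suc
    by (rule schedule_certificate_double)
      (use Suc silver_schedule_nonneg sum_list_silver_schedule in auto)
qed

end

theorem lemma1:
  fixes F :: "'a::euclidean_space \<Rightarrow> real"
    and G :: "'a \<Rightarrow> 'a"
    and xstar x0 :: 'a
    and k :: nat
  assumes convex: "convex_on UNIV F"
    and grad: "\<And>x. (F has_derivative (\<lambda>h. G x \<bullet> h)) (at x)"
    and smooth: "\<And>x y. norm (G x - G y) \<le> norm (x - y)"
    and minimizer: "\<And>y. F xstar \<le> F y"
    and k: "k \<ge> 1"
  shows
    "let N = 2 ^ k - 1;
         h = silver_schedule k;
         \<rho> = silver_ratio;
         x = gd_iter G h x0;
         Fstar = F xstar;
         Q = (\<lambda>i. Fstar - F (x i) - G (x i) \<bullet> (xstar - x i)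
                   - (1/2) * (norm (G (x i)))\<^sup>2)
     in (2 * \<rho> ^ k - 1) * (Fstar - F (x N)) + (1/2) * (norm (x0 - xstar))\<^sup>2
        - (\<Sum>i<N. h ! i * Q i) - \<rho> ^ k * Q N
        - (1/2) * (norm (x N - \<rho> ^ k *\<^sub>R G (x N) - xstar))\<^sup>2 \<ge> 0"
proof -
  have "0 \<le> schedule_certificate F G (silver_schedule k) (silver_ratio ^ k) x0 xstar"
    using smooth_convex_cocoercive[OF convex grad, of 1] smooth
    by (intro silver_schedule_certificate_nonneg) simp
  then show ?thesis
    by (simp add: Let_def schedule_certificate_def certificate_def gd_weighted_sum_def
        Q_gap_def length_silver_schedule)
qed

end
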